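(* Let $\mathcal{X}=(0,\pi)$ and let $\mu$ be either Lebesgue measure or $\mu_{\alpha,\beta}$ for some $\alpha,\beta>-1$. Fix $0<\xi\le1$. Assume there are constants $s>\xi$ and $c>0$ such that $\mu(B_r)\ge c\,r^s$ for every ball $B_r$ in $\mathcal{X}$ of radius $r<\operatorname{diam}\mathcal{X}$. Then the sublinear operator $f\mapsto U_\xi|f|$ is bounded from $L^1(\mathcal{X},d\mu)$ to weak $L^{s/(s-\xi)}(\mathcal{X},d\mu)$, i.e. $\mu(\{U_\xi|f|>\lambda\})\le\big(C\|f\|_{L^1(\mu)}/\lambda\big)^{s/(s-\xi)}$ for all $\lambda>0$ and $f\in L^1(d\mu)$.
   Context: $d\mu_{\alpha,\beta}(\theta)=(\sin\frac\theta2)^{2\alpha+1}(\cos\frac\theta2)^{2\beta+1}d\theta$ on $(0,\pi)$. Balls in $\mathcal{X}$ are $B(\theta,r)=\{\varphi\in(0,\pi):|\theta-\varphi|<r\}$. For $f\ge0$, $U_\xi f(\theta)=\int_{\mathcal{X}}\frac{|\theta-\varphi|^\xi}{\mu(B(\theta,|\theta-\varphi|))}f(\varphi)\,d\mu(\varphi)$. *)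

theory Defs
  imports "HOL-Analysis.Analysis"
begin

definition Xsp :: "real set" where "Xsp = {0<..<pi}"

definition leb_X :: "real measure" where
  "leb_X = restrict_space lborel Xsp"

definition mu_ab :: "real \<Rightarrow> real \<Rightarrow> real measure" where
  "mu_ab a b = density (restrict_space lborel Xsp)
     (\<lambda>\<theta>. ennreal ((sin (\<theta>/2)) powr (2*a+1) * (cos (\<theta>/2)) powr (2*b+1)))"

definition ballX :: "real \<Rightarrow> real \<Rightarrow> real set" where
  "ballX \<theta> r = {\<phi> \<in> Xsp. \<bar>\<theta> - \<phi>\<bar> < r}"

text \<open>The operator U_xi, applied to nonnegative f (value in [0,inf]).\<close>
definition U_op :: "real measure \<Rightarrow> real \<Rightarrow> (real \<Rightarrow> real) \<Rightarrow> real \<Rightarrow> ennreal" where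
  "U_op M \<xi> f \<theta> = (\<integral>\<^sup>+ \<phi>. ennreal (\<bar>\<theta> - \<phi>\<bar> powr \<xi> / measure M (ballX \<theta> \<bar>\<theta> - \<phi>\<bar>) * f \<phi>) \<partial>M)"

end

theory Submission
  imports Defs "HOL-Probability.Distribution_Functions"
begin

text \<open>Let \<open>F\<close> be the distribution function of \<open>\<mu>\<close> and \<open>a = 1 - \<xi>/s\<close>. The quantity
  \<open>|F \<theta> - F \<phi>|\<close> is the measure of the open interval between \<open>\<theta>\<close> and \<open>\<phi>\<close>; this interval lies in
  \<open>B(\<theta>, |\<theta> - \<phi>|)\<close> and is itself a ball of radius \<open>|\<theta> - \<phi>|/2\<close>. Together with
  \<open>\<mu>(B\<^sub>r) \<ge> c r\<^sup>s\<close> this bounds the kernel of \<open>U\<^sub>\<xi>\<close> by \<open>c\<^sup>-\<^sup>\<xi>\<^sup>/\<^sup>s |F \<theta> - F \<phi>|\<^sup>-\<^sup>a\<close>.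
  As \<open>\<mu>\<close> has no atoms, \<open>F\<close> is continuous, so \<open>{\<theta>. |F \<theta> - y| \<le> v}\<close> has measure at most \<open>2v\<close>,
  and a dyadic decomposition of the values of \<open>|F \<theta> - F \<phi>|\<close> gives
  \<open>\<integral>\<^sub>E |F \<theta> - F \<phi>|\<^sup>-\<^sup>a d\<mu>(\<theta>) \<le> C \<mu>(E)\<^sup>1\<^sup>-\<^sup>a\<close> uniformly in \<open>\<phi>\<close>. Integrating over
  \<open>E = {U\<^sub>\<xi>|f| > t}\<close> and exchanging the integrals yields \<open>t \<mu>(E) \<le> C' \<mu>(E)\<^sup>1\<^sup>-\<^sup>a \<parallel>f\<parallel>\<^sub>1\<close>,
  that is \<open>\<mu>(E) \<le> (C' \<parallel>f\<parallel>\<^sub>1 / t)\<^sup>1\<^sup>/\<^sup>a\<close>.\<close>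

lemma dyadic_bracket:
  fixes m u :: real
  assumes "0 < u" "u \<le> m"
  obtains k :: nat where "m / 2 ^ (k + 1) < u" "u \<le> m / 2 ^ k"
proof -
  define j where "j = \<lfloor>log 2 (m / u)\<rfloor>"
  have "0 \<le> log 2 (m / u)" using assms by simp
  then have "0 \<le> j" by (simp add: j_def)
  have "2 powr j \<le> m / u \<and> m / u < 2 powr (j + 1)"
    using assms by (subst floor_log_eq_powr_iff[symmetric]) (auto simp: j_def)
  moreover have "2 powr j = 2 ^ nat j" "2 powr (j + 1) = 2 ^ (nat j + 1)"
    using \<open>0 \<le> j\<close> by (simp_all add: powr_realpow[symmetric] powr_add)
  ultimately have "2 ^ nat j * u \<le> m" "m < 2 ^ (nat j + 1) * u"
    using assms by (simp_all add: field_simps)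
  then show ?thesis
    by (intro that[of "nat j"]) (simp_all add: field_simps)
qed

lemma powr_neg_le_dyadic_sum:
  fixes m u a :: real
  assumes m: "0 < m" and u: "0 \<le> u" and a: "0 < a"
  shows "ennreal (u powr - a) \<le>
    ennreal (m powr - a) + (\<Sum>k. ennreal ((m / 2 ^ (k + 1)) powr - a) * indicator {..m / 2 ^ k} u)"
proof (cases "u = 0 \<or> m < u")
  case True
  then have "u powr - a \<le> m powr - a"
    using m u a by (auto intro: powr_mono2')
  then show ?thesis by (intro add_increasing2 ennreal_leI) simp_all
next
  case False
  then obtain k where k: "m / 2 ^ (k + 1) < u" "u \<le> m / 2 ^ k"
    using dyadic_bracket[of u m] u by fastforce
  have "u powr - a \<le> (m / 2 ^ (k + 1)) powr - a"
    using k m a by (intro powr_mono2') auto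
  then have "ennreal (u powr - a) \<le> ennreal ((m / 2 ^ (k + 1)) powr - a) * indicator {..m / 2 ^ k} u"
    using k by (simp add: ennreal_leI)
  also have "\<dots> \<le> (\<Sum>k. ennreal ((m / 2 ^ (k + 1)) powr - a) * indicator {..m / 2 ^ k} u)"
    using sum_le_suminf[OF summableI, of "{k}"] by simp
  also have "\<dots> \<le> ennreal (m powr - a) + \<dots>"
    by (rule add_increasing) simp_all
  finally show ?thesis .
qed

lemma dyadic_term_eq:
  fixes m a :: real and k :: nat
  assumes m: "0 < m"
  shows "(m / 2 ^ (k + 1)) powr - a * (m / 2 ^ k) = 2 powr a * m powr (1 - a) * (2 powr (a - 1)) ^ k"
proof -
  have "m / 2 ^ (k + 1) = exp (ln m - real (k + 1) * ln 2)"
    using m by (simp add: exp_diff ln_realpow[symmetric] del: of_nat_Suc)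
  moreover have "m / 2 ^ k = exp (ln m - real k * ln 2)"
    using m by (simp add: exp_diff ln_realpow[symmetric])
  moreover have "(2 powr (a - 1)) ^ k = exp (real k * ((a - 1) * ln 2))"
    by (simp add: powr_def exp_of_nat_mult)
  moreover have "m powr (1 - a) = exp ((1 - a) * ln m)" "(2::real) powr a = exp (a * ln 2)"
    using m by (simp_all add: powr_def)
  ultimately show ?thesis
    by (simp only: powr_def exp_not_eq_zero if_False ln_exp exp_add[symmetric]) (simp add: algebra_simps)
qed

definition dyadic_const :: "real \<Rightarrow> real \<Rightarrow> real" where
  "dyadic_const K a = 1 + K * 2 powr a / (1 - 2 powr (a - 1))"

lemma dyadic_const_pos:
  assumes "0 \<le> K" "a < 1"
  shows "0 < dyadic_const K a"
proof -
  have "(2::real) powr (a - 1) < 1"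
    using assms by (simp add: powr_less_one)
  then have "0 \<le> K * 2 powr a / (1 - 2 powr (a - 1))"
    using assms by simp
  then show ?thesis
    unfolding dyadic_const_def by linarith
qed

lemma (in finite_measure) dyadic_layer_sum_le:
  fixes g :: "'a \<Rightarrow> real" and m a K :: real
  assumes level: "\<And>v. 0 < v \<Longrightarrow> measure M {x \<in> space M. g x \<le> v} \<le> K * v"
    and m: "0 < m" and a: "a < 1"
  shows "(\<Sum>k. ennreal ((m / 2 ^ (k + 1)) powr - a) * emeasure M {x \<in> space M. g x \<le> m / 2 ^ k})
    \<le> ennreal (K * 2 powr a * m powr (1 - a) / (1 - 2 powr (a - 1)))"
proof -
  define q where "q = (2::real) powr (a - 1)"
  have q: "0 \<le> q" "q < 1"
    using a by (auto simp: q_def intro!: powr_less_one)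
  have K: "0 \<le> K"
    using level[of 1] measure_nonneg[of M "{x \<in> space M. g x \<le> 1}"] by linarith
  have layer_bound: "ennreal ((m / 2 ^ (k + 1)) powr - a) * emeasure M {x \<in> space M. g x \<le> m / 2 ^ k}
      \<le> ennreal (K * 2 powr a * m powr (1 - a) * q ^ k)" for k
  proof -
    have "emeasure M {x \<in> space M. g x \<le> m / 2 ^ k} \<le> ennreal (K * (m / 2 ^ k))"
      using level[of "m / 2 ^ k"] m by (simp add: emeasure_eq_measure ennreal_leI)
    then have "ennreal ((m / 2 ^ (k + 1)) powr - a) * emeasure M {x \<in> space M. g x \<le> m / 2 ^ k}
        \<le> ennreal ((m / 2 ^ (k + 1)) powr - a) * ennreal (K * (m / 2 ^ k))"
      by (rule mult_left_mono) simp
    also have "\<dots> = ennreal ((m / 2 ^ (k + 1)) powr - a * (K * (m / 2 ^ k)))"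
      using K m by (intro ennreal_mult[symmetric]) auto
    also have "(m / 2 ^ (k + 1)) powr - a * (K * (m / 2 ^ k)) = K * 2 powr a * m powr (1 - a) * q ^ k"
      using arg_cong[OF dyadic_term_eq[OF m, where a=a and k=k], of "(*) K"]
      by (simp add: q_def ac_simps)
    finally show ?thesis .
  qed
  have "(\<lambda>k. K * 2 powr a * m powr (1 - a) * q ^ k) sums (K * 2 powr a * m powr (1 - a) / (1 - q))"
    using sums_mult[OF geometric_sums[of q]] q by (simp add: divide_inverse)
  then have "(\<Sum>k. ennreal (K * 2 powr a * m powr (1 - a) * q ^ k))
      = ennreal (K * 2 powr a * m powr (1 - a) / (1 - q))"
    using K q by (intro suminf_ennreal_eq) auto
  moreover have "(\<Sum>k. ennreal ((m / 2 ^ (k + 1)) powr - a) * emeasure M {x \<in> space M. g x \<le> m / 2 ^ k})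
      \<le> (\<Sum>k. ennreal (K * 2 powr a * m powr (1 - a) * q ^ k))"
    by (intro suminf_le layer_bound) auto
  ultimately show ?thesis
    by (simp add: q_def)
qed

lemma (in finite_measure) nn_integral_indicator_powr_neg_le:
  fixes g :: "'a \<Rightarrow> real" and a K :: real
  assumes g[measurable]: "g \<in> borel_measurable M"
    and g_nonneg: "\<And>x. x \<in> space M \<Longrightarrow> 0 \<le> g x"
    and level: "\<And>v. 0 < v \<Longrightarrow> measure M {x \<in> space M. g x \<le> v} \<le> K * v"
    and E: "E \<in> sets M" and a: "0 < a" "a < 1"
  shows "(\<integral>\<^sup>+x. indicator E x * ennreal (g x powr - a) \<partial>M)
    \<le> ennreal (dyadic_const K a * measure M E powr (1 - a))"
proof (cases "measure M E = 0")
  case True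
  then have "E \<in> null_sets M"
    using E by (simp add: emeasure_eq_measure null_sets_def)
  then have "(\<integral>\<^sup>+x. ennreal (g x powr - a) * indicator E x \<partial>M) = 0"
    by (rule nn_integral_null_set)
  then show ?thesis by (simp add: mult.commute)
next
  case False
  define m where "m = measure M E"
  define L where "L k = {x \<in> space M. g x \<le> m / 2 ^ k}" for k :: nat
  have m: "0 < m"
    using False measure_nonneg[of M E] unfolding m_def by linarith
  have L[measurable]: "L k \<in> sets M" for k
    unfolding L_def by measurable
  have "(\<integral>\<^sup>+x. indicator E x * ennreal (g x powr - a) \<partial>M)
      \<le> (\<integral>\<^sup>+x. ennreal (m powr - a) * indicator E x
            + (\<Sum>k. ennreal ((m / 2 ^ (k + 1)) powr - a) * indicator (L k) x) \<partial>M)"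
  proof (rule nn_integral_mono)
    fix x assume x: "x \<in> space M"
    have "(\<Sum>k. ennreal ((m / 2 ^ (k + 1)) powr - a) * indicator (L k) x)
        = (\<Sum>k. ennreal ((m / 2 ^ (k + 1)) powr - a) * indicator {..m / 2 ^ k} (g x))"
      using x by (simp add: L_def indicator_def)
    then show "indicator E x * ennreal (g x powr - a)
        \<le> ennreal (m powr - a) * indicator E x
          + (\<Sum>k. ennreal ((m / 2 ^ (k + 1)) powr - a) * indicator (L k) x)"
      using powr_neg_le_dyadic_sum[OF m g_nonneg[OF x] a(1)] by (cases "x \<in> E") auto
  qed
  also have "\<dots> = ennreal (m powr - a) * emeasure M E
      + (\<Sum>k. ennreal ((m / 2 ^ (k + 1)) powr - a) * emeasure M (L k))"
    using E by (simp add: nn_integral_add nn_integral_suminf nn_integral_cmult_indicator)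
  also have "\<dots> \<le> ennreal (m powr (1 - a)) + ennreal (K * 2 powr a * m powr (1 - a) / (1 - 2 powr (a - 1)))"
  proof (rule add_mono)
    have "m powr - a * m = m powr (1 - a)"
      using m by (simp add: powr_diff powr_minus divide_inverse)
    then show "ennreal (m powr - a) * emeasure M E \<le> ennreal (m powr (1 - a))"
      using m by (simp add: emeasure_eq_measure m_def ennreal_mult[symmetric])
  next
    show "(\<Sum>k. ennreal ((m / 2 ^ (k + 1)) powr - a) * emeasure M (L k))
        \<le> ennreal (K * 2 powr a * m powr (1 - a) / (1 - 2 powr (a - 1)))"
      using dyadic_layer_sum_le[OF level m a(2)] by (simp add: L_def)
  qed
  also have "\<dots> = ennreal (dyadic_const K a * m powr (1 - a))"
  proof -
    have "0 \<le> K"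
      using level[of 1] measure_nonneg[of M "{x \<in> space M. g x \<le> 1}"] by linarith
    moreover have "(2::real) powr (a - 1) < 1"
      using a by (simp add: powr_less_one)
    ultimately show ?thesis
      unfolding dyadic_const_def by (simp add: ennreal_plus[symmetric] distrib_right del: ennreal_plus)
  qed
  finally show ?thesis by (simp add: m_def)
qed

context finite_borel_measure
begin

lemma measure_Icc_eq_cdf_diff:
  assumes no_atoms: "\<And>x. measure M {x} = 0" and "x \<le> y"
  shows "measure M {x..y} = cdf M y - cdf M x"
proof (cases "x = y")
  case False
  then have "{x..y} = {x} \<union> {x<..y}" "{x} \<inter> {x<..y} = {}"
    using \<open>x \<le> y\<close> by auto
  then have "measure M {x..y} = measure M {x} + measure M {x<..y}"
    using finite_measure_Union[of "{x}" "{x<..y}"] by (simp add: M_is_borel)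
  then show ?thesis
    using cdf_diff_eq[of x y] False \<open>x \<le> y\<close> no_atoms by simp
qed (simp add: no_atoms)

lemma measure_Ioo_eq_cdf_diff:
  assumes no_atoms: "\<And>x. measure M {x} = 0" and "x \<le> y"
  shows "measure M {x<..<y} = cdf M y - cdf M x"
proof -
  have "emeasure M ({x} \<union> {y}) \<le> emeasure M {x} + emeasure M {y}"
    by (rule emeasure_subadditive) auto
  then have "{x, y} \<in> null_sets M"
    using no_atoms by (auto simp: emeasure_eq_measure null_sets_def insert_commute)
  moreover have "{x<..<y} = {x..y} - {x, y}"
    by auto
  ultimately show ?thesis
    using measure_Icc_eq_cdf_diff[OF no_atoms \<open>x \<le> y\<close>]
      measure_Diff_null_set[where A="{x..y}" and B="{x, y}"] by (simp add: M_is_borel)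
qed

lemma measure_cdf_preimage_le:
  assumes no_atoms: "\<And>x. measure M {x} = 0" and "p \<le> q"
  shows "measure M {x. p \<le> cdf M x \<and> cdf M x \<le> q} \<le> q - p"
proof -
  define T where "T = {x. p \<le> cdf M x \<and> cdf M x \<le> q}"
  define S where "S n = T \<inter> {- real n..real n}" for n :: nat
  have "continuous_on UNIV (cdf M)"
    using isCont_cdf no_atoms by (simp add: continuous_at_imp_continuous_on)
  then have "closed T"
    unfolding T_def by (intro closed_Collect_conj closed_Collect_le) (auto intro: continuous_intros)
  then have closed_S: "closed (S n)" for n
    by (simp add: S_def closed_Int)
  have S_le: "measure M (S n) \<le> q - p" for n
  proof (cases "S n = {}")
    case False
    have "bounded (S n)"
      by (simp add: S_def bounded_Int)
    then have Inf_S: "Inf (S n) \<in> S n" and Sup_S: "Sup (S n) \<in> S n"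
      using closed_S False by (auto intro: closed_contains_Inf closed_contains_Sup
          bounded_imp_bdd_below bounded_imp_bdd_above)
    have "S n \<subseteq> {Inf (S n)..Sup (S n)}"
      using bounded_imp_bdd_below[OF \<open>bounded (S n)\<close>] bounded_imp_bdd_above[OF \<open>bounded (S n)\<close>]
      by (auto intro: cInf_lower cSup_upper)
    then have "measure M (S n) \<le> measure M {Inf (S n)..Sup (S n)}"
      by (rule finite_measure_mono) (simp add: M_is_borel)
    also have "\<dots> = cdf M (Sup (S n)) - cdf M (Inf (S n))"
      using \<open>S n \<subseteq> {Inf (S n)..Sup (S n)}\<close> Inf_S
      by (intro measure_Icc_eq_cdf_diff[OF no_atoms]) auto
    also have "\<dots> \<le> q - p"
      using Inf_S Sup_S by (auto simp: S_def T_def)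
    finally show ?thesis .
  qed (use \<open>p \<le> q\<close> in simp)
  have "(\<lambda>n. measure M (S n)) \<longlonglongrightarrow> measure M (\<Union>n. S n)"
    using closed_S by (intro finite_Lim_measure_incseq) (auto simp: incseq_def S_def intro: borel_closed)
  moreover have "(\<Union>n. S n) = T"
  proof (intro equalityI subsetI)
    fix x assume "x \<in> T"
    obtain n where "\<bar>x\<bar> \<le> real n"
      using real_arch_simple by blast
    with \<open>x \<in> T\<close> have "x \<in> S n"
      by (auto simp: S_def abs_le_iff)
    then show "x \<in> (\<Union>n. S n)"
      by blast
  qed (auto simp: S_def)
  ultimately show ?thesis
    unfolding T_def[symmetric] using S_le by (intro LIMSEQ_le_const2) auto
qed

lemma measure_cdf_near_le:
  assumes no_atoms: "\<And>x. measure M {x} = 0" and "0 \<le> v"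
  shows "measure M {x. \<bar>cdf M x - y\<bar> \<le> v} \<le> 2 * v"
proof -
  have "{x. \<bar>cdf M x - y\<bar> \<le> v} = {x. y - v \<le> cdf M x \<and> cdf M x \<le> y + v}"
    by auto
  then show ?thesis
    using measure_cdf_preimage_le[OF no_atoms, of "y - v" "y + v"] \<open>0 \<le> v\<close> by simp
qed

end

lemma kernel_powr_bound:
  fixes c \<xi> s d B u :: real
  assumes c: "0 < c" and xi: "0 < \<xi>" "\<xi> < s" and d: "0 < d"
    and B: "c * d powr s \<le> B" and u: "0 < u" "u \<le> B"
  shows "d powr \<xi> / B \<le> c powr - (\<xi> / s) * u powr - (1 - \<xi> / s)"
proof -
  define b where "b = \<xi> / s"
  have b: "0 < b" "b < 1"
    using xi by (auto simp: b_def)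
  have "0 < B"
    using u by linarith
  have "d powr \<xi> = (d powr s) powr b"
    using xi by (simp add: powr_powr b_def)
  also have "\<dots> \<le> (B / c) powr b"
    using B c b by (intro powr_mono2) (auto simp: field_simps)
  also have "\<dots> = B powr b / c powr b"
    using \<open>0 < B\<close> c by (simp add: powr_divide)
  finally have "d powr \<xi> / B \<le> B powr b / c powr b / B"
    using \<open>0 < B\<close> by (intro divide_right_mono) auto
  also have "\<dots> = c powr - b * B powr (b - 1)"
    using \<open>0 < B\<close> c by (simp add: powr_diff powr_minus divide_inverse)
  also have "\<dots> \<le> c powr - b * u powr (b - 1)"
    using u b by (intro mult_left_mono powr_mono2') auto
  finally show ?thesis
    by (simp add: b_def)
qed

lemma le_powr_inverse_if_mult_le_powr:
  fixes t m A a :: real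
  assumes t: "0 < t" and m: "0 < m" and a: "0 < a" and le: "t * m \<le> A * m powr (1 - a)"
  shows "m \<le> (A / t) powr (1 / a)"
proof -
  have "m = m powr a * m powr (1 - a)"
    using m by (simp add: powr_add[symmetric])
  then have "(t * m powr a) * m powr (1 - a) \<le> A * m powr (1 - a)"
    using le by (metis mult.assoc)
  then have "t * m powr a \<le> A"
    using m by simp
  then have "m powr a \<le> A / t"
    using t by (simp add: field_simps)
  then have "(m powr a) powr (1 / a) \<le> (A / t) powr (1 / a)"
    using a by (intro powr_mono2) auto
  then show ?thesis
    using m a by (simp add: powr_powr)
qed

lemma Xsp_borel[measurable]: "Xsp \<in> sets borel"
  by (simp add: Xsp_def)

locale diffuse_finite_measure_on_X =
  fixes M :: "real measure"
  assumes sets_M: "sets M = sets (restrict_space lborel Xsp)"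
    and emeasure_Xsp_finite: "emeasure M Xsp < \<infinity>"
    and emeasure_singleton: "\<And>x. emeasure M {x} = 0"
begin

lemma space_M: "space M = Xsp"
  using sets_eq_imp_space_eq[OF sets_M] by (simp add: space_restrict_space)

sublocale finite_measure M
  by standard (use emeasure_Xsp_finite in \<open>simp add: space_M infinity_ennreal_def\<close>)

lemma borel_measurable_M: "g \<in> borel_measurable borel \<Longrightarrow> g \<in> borel_measurable M"
  by (subst measurable_cong_sets[OF sets_M refl]) (simp add: measurable_restrict_space1)

lemma Int_Xsp_in_sets_M: "A \<in> sets borel \<Longrightarrow> A \<inter> Xsp \<in> sets M"
  unfolding sets_M by (subst sets_restrict_space_iff) auto

sublocale D: finite_borel_measure "distr M borel (\<lambda>x. x)"
  by (intro finite_borel_measure.intro finite_measure_distr finite_borel_measure_axioms.intro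
      finite_measure_axioms borel_measurable_M) simp_all

lemma measure_distr_eq: "A \<in> sets borel \<Longrightarrow> measure (distr M borel (\<lambda>x. x)) A = measure M (A \<inter> Xsp)"
  using borel_measurable_M[of "\<lambda>x. x"] by (simp add: measure_distr space_M)

lemma distr_no_atoms: "measure (distr M borel (\<lambda>x. x)) {x} = 0"
proof -
  have "measure M {x} = 0"
    using emeasure_singleton[of x] by (simp add: measure_def)
  then show ?thesis
    by (cases "x \<in> Xsp") (simp_all add: measure_distr_eq)
qed

definition F :: "real \<Rightarrow> real" where
  "F = cdf (distr M borel (\<lambda>x. x))"

lemma F_borel_measurable[measurable]: "F \<in> borel_measurable borel"
  unfolding F_def by (rule borel_measurable_mono) (simp add: mono_def D.cdf_nondecreasing)

lemma F_measurable[measurable]: "F \<in> borel_measurable M"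
  by (rule borel_measurable_M) simp

lemma abs_F_diff_eq: "\<bar>F \<theta> - F \<phi>\<bar> = measure M (ballX ((\<theta> + \<phi>) / 2) (\<bar>\<theta> - \<phi>\<bar> / 2))"
proof -
  have "\<bar>F x - F y\<bar> = measure M (ballX ((x + y) / 2) ((y - x) / 2))" if "x \<le> y" for x y
  proof -
    have "{x<..<y} \<inter> Xsp = ballX ((x + y) / 2) ((y - x) / 2)"
      by (auto simp: ballX_def abs_less_iff field_simps)
    then show ?thesis
      using D.measure_Ioo_eq_cdf_diff[OF distr_no_atoms \<open>x \<le> y\<close>] D.cdf_nondecreasing[OF \<open>x \<le> y\<close>]
      by (simp add: F_def measure_distr_eq)
  qed
  from this[of \<theta> \<phi>] this[of \<phi> \<theta>] show ?thesis
    by (cases "\<theta> \<le> \<phi>") (simp_all add: abs_minus_commute add.commute)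
qed

lemma measure_F_near_le:
  assumes "0 \<le> v"
  shows "measure M {\<theta> \<in> space M. \<bar>F \<theta> - y\<bar> \<le> v} \<le> 2 * v"
proof -
  have "{\<theta> \<in> space M. \<bar>F \<theta> - y\<bar> \<le> v} = {x. \<bar>F x - y\<bar> \<le> v} \<inter> Xsp"
    by (auto simp: space_M)
  moreover have "{x. \<bar>F x - y\<bar> \<le> v} \<in> sets borel"
    by measurable
  ultimately show ?thesis
    using D.measure_cdf_near_le[OF distr_no_atoms assms, of y] by (simp add: F_def measure_distr_eq)
qed

lemma ballX_in_sets_M: "ballX \<theta> r \<in> sets M"
proof -
  have "ballX \<theta> r = {\<phi>. \<bar>\<theta> - \<phi>\<bar> < r} \<inter> Xsp"
    by (auto simp: ballX_def)
  then show ?thesis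
    by (simp add: Int_Xsp_in_sets_M)
qed

lemma kernel_le_F_powr:
  assumes c: "0 < c" and xi: "0 < \<xi>" "\<xi> < s"
    and ball_lower: "\<And>\<theta> r. \<theta> \<in> Xsp \<Longrightarrow> 0 < r \<Longrightarrow> r < pi \<Longrightarrow> measure M (ballX \<theta> r) \<ge> c * r powr s"
    and \<theta>: "\<theta> \<in> Xsp" and \<phi>: "\<phi> \<in> Xsp"
  shows "\<bar>\<theta> - \<phi>\<bar> powr \<xi> / measure M (ballX \<theta> \<bar>\<theta> - \<phi>\<bar>)
    \<le> c powr - (\<xi> / s) * \<bar>F \<theta> - F \<phi>\<bar> powr - (1 - \<xi> / s)"
proof (cases "\<theta> = \<phi>")
  case False
  define d where "d = \<bar>\<theta> - \<phi>\<bar>"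
  have d: "0 < d" "d < pi"
    using False \<theta> \<phi> by (auto simp: d_def Xsp_def)
  have mid: "(\<theta> + \<phi>) / 2 \<in> Xsp"
    using \<theta> \<phi> by (auto simp: Xsp_def)
  have "0 < c * (d / 2) powr s"
    using c d by simp
  also have "\<dots> \<le> \<bar>F \<theta> - F \<phi>\<bar>"
    using ball_lower[OF mid, of "d / 2"] d by (simp add: abs_F_diff_eq d_def)
  finally have F_pos: "0 < \<bar>F \<theta> - F \<phi>\<bar>" .
  have "ballX ((\<theta> + \<phi>) / 2) (d / 2) \<subseteq> ballX \<theta> d"
    by (auto simp: ballX_def d_def abs_if field_simps split: if_splits)
  then have "\<bar>F \<theta> - F \<phi>\<bar> \<le> measure M (ballX \<theta> d)"
    unfolding abs_F_diff_eq d_def[symmetric] by (intro finite_measure_mono ballX_in_sets_M)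
  from kernel_powr_bound[OF c xi d(1) ball_lower[OF \<theta> d] F_pos this] show ?thesis
    by (simp add: d_def)
qed simp \<comment> \<open>for \<open>\<theta> = \<phi>\<close> both sides are \<open>0\<close>, since \<open>0 powr _ = 0\<close>\<close>

lemma U_op_le_F_potential:
  assumes c: "0 < c" and xi: "0 < \<xi>" "\<xi> < s"
    and ball_lower: "\<And>\<theta> r. \<theta> \<in> Xsp \<Longrightarrow> 0 < r \<Longrightarrow> r < pi \<Longrightarrow> measure M (ballX \<theta> r) \<ge> c * r powr s"
    and f[measurable]: "f \<in> borel_measurable M" and \<theta>: "\<theta> \<in> Xsp"
  shows "U_op M \<xi> (\<lambda>x. \<bar>f x\<bar>) \<theta>
    \<le> ennreal (c powr - (\<xi> / s)) * (\<integral>\<^sup>+\<phi>. ennreal (\<bar>F \<theta> - F \<phi>\<bar> powr - (1 - \<xi> / s)) * ennreal \<bar>f \<phi>\<bar> \<partial>M)"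
proof -
  have "U_op M \<xi> (\<lambda>x. \<bar>f x\<bar>) \<theta>
      \<le> (\<integral>\<^sup>+\<phi>. ennreal (c powr - (\<xi> / s)) * (ennreal (\<bar>F \<theta> - F \<phi>\<bar> powr - (1 - \<xi> / s)) * ennreal \<bar>f \<phi>\<bar>) \<partial>M)"
    unfolding U_op_def
  proof (rule nn_integral_mono)
    fix \<phi> assume "\<phi> \<in> space M"
    then have "\<bar>\<theta> - \<phi>\<bar> powr \<xi> / measure M (ballX \<theta> \<bar>\<theta> - \<phi>\<bar>) * \<bar>f \<phi>\<bar>
        \<le> c powr - (\<xi> / s) * \<bar>F \<theta> - F \<phi>\<bar> powr - (1 - \<xi> / s) * \<bar>f \<phi>\<bar>"
      using kernel_le_F_powr[OF c xi ball_lower \<theta>] by (intro mult_right_mono) (auto simp: space_M)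
    then show "ennreal (\<bar>\<theta> - \<phi>\<bar> powr \<xi> / measure M (ballX \<theta> \<bar>\<theta> - \<phi>\<bar>) * \<bar>f \<phi>\<bar>)
        \<le> ennreal (c powr - (\<xi> / s)) * (ennreal (\<bar>F \<theta> - F \<phi>\<bar> powr - (1 - \<xi> / s)) * ennreal \<bar>f \<phi>\<bar>)"
      by (simp add: ennreal_leI ennreal_mult[symmetric])
  qed
  also have "\<dots> = ennreal (c powr - (\<xi> / s))
      * (\<integral>\<^sup>+\<phi>. ennreal (\<bar>F \<theta> - F \<phi>\<bar> powr - (1 - \<xi> / s)) * ennreal \<bar>f \<phi>\<bar> \<partial>M)"
    by (rule nn_integral_cmult) simp
  finally show ?thesis .
qed

lemma nn_integral_F_potential_on_set_le:
  assumes f[measurable]: "f \<in> borel_measurable M" and E[measurable]: "E \<in> sets M"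
    and a: "0 < a" "a < 1"
  shows "(\<integral>\<^sup>+\<theta>. indicator E \<theta> * (\<integral>\<^sup>+\<phi>. ennreal (\<bar>F \<theta> - F \<phi>\<bar> powr - a) * ennreal \<bar>f \<phi>\<bar> \<partial>M) \<partial>M)
    \<le> ennreal (dyadic_const 2 a * measure M E powr (1 - a)) * (\<integral>\<^sup>+\<phi>. ennreal \<bar>f \<phi>\<bar> \<partial>M)"
proof -
  interpret P: pair_sigma_finite M M ..
  have "(\<integral>\<^sup>+\<theta>. indicator E \<theta> * (\<integral>\<^sup>+\<phi>. ennreal (\<bar>F \<theta> - F \<phi>\<bar> powr - a) * ennreal \<bar>f \<phi>\<bar> \<partial>M) \<partial>M)
      = (\<integral>\<^sup>+\<theta>. (\<integral>\<^sup>+\<phi>. indicator E \<theta> * ennreal (\<bar>F \<theta> - F \<phi>\<bar> powr - a) * ennreal \<bar>f \<phi>\<bar> \<partial>M) \<partial>M)"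
    by (simp add: nn_integral_cmult[symmetric] mult.assoc)
  also have "\<dots> = (\<integral>\<^sup>+\<phi>. (\<integral>\<^sup>+\<theta>. indicator E \<theta> * ennreal (\<bar>F \<theta> - F \<phi>\<bar> powr - a) * ennreal \<bar>f \<phi>\<bar> \<partial>M) \<partial>M)"
    by (rule P.Fubini') measurable
  also have "\<dots> = (\<integral>\<^sup>+\<phi>. (\<integral>\<^sup>+\<theta>. indicator E \<theta> * ennreal (\<bar>F \<theta> - F \<phi>\<bar> powr - a) \<partial>M) * ennreal \<bar>f \<phi>\<bar> \<partial>M)"
    by (simp add: nn_integral_multc)
  also have "\<dots> \<le> (\<integral>\<^sup>+\<phi>. ennreal (dyadic_const 2 a * measure M E powr (1 - a)) * ennreal \<bar>f \<phi>\<bar> \<partial>M)"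
  proof (intro nn_integral_mono mult_right_mono)
    fix \<phi>
    show "(\<integral>\<^sup>+\<theta>. indicator E \<theta> * ennreal (\<bar>F \<theta> - F \<phi>\<bar> powr - a) \<partial>M)
        \<le> ennreal (dyadic_const 2 a * measure M E powr (1 - a))"
      using measure_F_near_le[of _ "F \<phi>"] by (intro nn_integral_indicator_powr_neg_le E a) auto
  qed simp
  also have "\<dots> = ennreal (dyadic_const 2 a * measure M E powr (1 - a)) * (\<integral>\<^sup>+\<phi>. ennreal \<bar>f \<phi>\<bar> \<partial>M)"
    by (rule nn_integral_cmult) simp
  finally show ?thesis .
qed

lemma mult_measure_le_of_U_op_ge:
  assumes c: "0 < c" and xi: "0 < \<xi>" "\<xi> < s"
    and ball_lower: "\<And>\<theta> r. \<theta> \<in> Xsp \<Longrightarrow> 0 < r \<Longrightarrow> r < pi \<Longrightarrow> measure M (ballX \<theta> r) \<ge> c * r powr s"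
    and f: "integrable M f" and t: "0 \<le> t"
    and E[measurable]: "E \<in> sets M" and U_ge: "\<And>\<theta>. \<theta> \<in> E \<Longrightarrow> ennreal t \<le> U_op M \<xi> (\<lambda>x. \<bar>f x\<bar>) \<theta>"
  shows "t * measure M E
    \<le> c powr - (\<xi> / s) * dyadic_const 2 (1 - \<xi> / s) * (\<integral>x. \<bar>f x\<bar> \<partial>M) * measure M E powr (\<xi> / s)"
    (is "_ \<le> ?C * ?N * _")
proof -
  define a where "a = 1 - \<xi> / s"
  have a: "0 < a" "a < 1"
    using xi by (auto simp: a_def field_simps)
  have f_meas[measurable]: "f \<in> borel_measurable M"
    using f by (rule borel_measurable_integrable)
  have "ennreal (t * measure M E) = (\<integral>\<^sup>+\<theta>. ennreal t * indicator E \<theta> \<partial>M)"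
    using t by (simp add: nn_integral_cmult_indicator emeasure_eq_measure ennreal_mult)
  also have "\<dots> \<le> (\<integral>\<^sup>+\<theta>. indicator E \<theta> * (ennreal (c powr - (\<xi> / s))
      * (\<integral>\<^sup>+\<phi>. ennreal (\<bar>F \<theta> - F \<phi>\<bar> powr - a) * ennreal \<bar>f \<phi>\<bar> \<partial>M)) \<partial>M)"
  proof (rule nn_integral_mono)
    fix \<theta> assume "\<theta> \<in> space M"
    show "ennreal t * indicator E \<theta> \<le> indicator E \<theta> * (ennreal (c powr - (\<xi> / s))
        * (\<integral>\<^sup>+\<phi>. ennreal (\<bar>F \<theta> - F \<phi>\<bar> powr - a) * ennreal \<bar>f \<phi>\<bar> \<partial>M))"
    proof (cases "\<theta> \<in> E")
      case True
      have "ennreal t \<le> U_op M \<xi> (\<lambda>x. \<bar>f x\<bar>) \<theta>"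
        using True by (rule U_ge)
      also have "\<dots> \<le> ennreal (c powr - (\<xi> / s))
          * (\<integral>\<^sup>+\<phi>. ennreal (\<bar>F \<theta> - F \<phi>\<bar> powr - a) * ennreal \<bar>f \<phi>\<bar> \<partial>M)"
        using U_op_le_F_potential[OF c xi ball_lower f_meas] True sets.sets_into_space[OF E]
        by (auto simp: a_def space_M)
      finally show ?thesis
        using True by simp
    qed simp
  qed
  also have "\<dots> = ennreal (c powr - (\<xi> / s)) * (\<integral>\<^sup>+\<theta>. indicator E \<theta>
      * (\<integral>\<^sup>+\<phi>. ennreal (\<bar>F \<theta> - F \<phi>\<bar> powr - a) * ennreal \<bar>f \<phi>\<bar> \<partial>M) \<partial>M)"
    by (simp add: nn_integral_cmult[symmetric] ac_simps)
  also have "\<dots> \<le> ennreal (c powr - (\<xi> / s))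
      * (ennreal (dyadic_const 2 a * measure M E powr (1 - a)) * ennreal ?N)"
    using nn_integral_F_potential_on_set_le[OF f_meas E a] f
    by (intro mult_left_mono) (simp_all add: nn_integral_eq_integral)
  also have "\<dots> = ennreal (?C * ?N * measure M E powr (\<xi> / s))"
    using dyadic_const_pos[of 2 a] a by (simp add: ennreal_mult a_def ac_simps)
  finally show ?thesis
    using dyadic_const_pos[of 2 a] a by (simp add: ennreal_le_iff a_def)
qed

lemma weak_type_U_op:
  assumes c: "0 < c" and xi: "0 < \<xi>" "\<xi> < s"
    and ball_lower: "\<And>\<theta> r. \<theta> \<in> Xsp \<Longrightarrow> 0 < r \<Longrightarrow> r < pi \<Longrightarrow> measure M (ballX \<theta> r) \<ge> c * r powr s"
    and f: "integrable M f" and t: "0 < t"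
  shows "emeasure M {\<theta> \<in> space M. U_op M \<xi> (\<lambda>x. \<bar>f x\<bar>) \<theta> > ennreal t}
    \<le> ennreal ((c powr - (\<xi> / s) * dyadic_const 2 (1 - \<xi> / s) * (\<integral>x. \<bar>f x\<bar> \<partial>M) / t) powr (s / (s - \<xi>)))"
    (is "emeasure M ?E \<le> ennreal ((?C * ?N / t) powr _)")
proof (cases "?E \<in> sets M \<and> measure M ?E \<noteq> 0")
  case True
  then have E: "?E \<in> sets M"
    by blast
  have m: "0 < measure M ?E"
    using True measure_nonneg[of M ?E] by (simp add: order_less_le)
  have "t * measure M ?E \<le> ?C * ?N * measure M ?E powr (1 - (1 - \<xi> / s))"
    using mult_measure_le_of_U_op_ge[OF c xi ball_lower f _ E] t by (simp add: less_imp_le)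
  then have "measure M ?E \<le> (?C * ?N / t) powr (1 / (1 - \<xi> / s))"
    using xi by (intro le_powr_inverse_if_mult_le_powr[OF t m]) (simp_all add: field_simps)
  also have "1 / (1 - \<xi> / s) = s / (s - \<xi>)"
    using xi by (simp add: field_simps)
  finally show ?thesis
    by (simp add: emeasure_eq_measure ennreal_leI)
next
  case False
  then have "emeasure M ?E = 0"
    by (auto simp: emeasure_notin_sets measure_notin_sets emeasure_eq_measure)
  then show ?thesis
    by simp
qed

end

lemma ballX_center_eq_Xsp: "ballX (pi / 2) (pi / 2) = Xsp"
  by (auto simp: ballX_def Xsp_def abs_if)

lemma emeasure_Xsp_finite_if_ball_lower:
  assumes c: "0 < c"
    and ball_lower: "\<And>\<theta> r. \<theta> \<in> Xsp \<Longrightarrow> 0 < r \<Longrightarrow> r < pi \<Longrightarrow> measure M (ballX \<theta> r) \<ge> c * r powr s"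
  shows "emeasure M Xsp < \<infinity>"
proof (rule ccontr)
  assume "\<not> emeasure M Xsp < \<infinity>"
  then have "measure M Xsp = 0"
    by (metis enn2real_top infinity_ennreal_def measure_def top.not_eq_extremum)
  moreover have "c * (pi / 2) powr s \<le> measure M Xsp"
    using ball_lower[of "pi / 2" "pi / 2"] by (simp add: ballX_center_eq_Xsp Xsp_def)
  ultimately show False
    using c by (simp add: mult_le_0_iff)
qed

lemma emeasure_leb_X_singleton: "emeasure leb_X {x} = 0"
  unfolding leb_X_def
  by (cases "x \<in> Xsp") (simp_all add: emeasure_restrict_space emeasure_notin_sets sets_restrict_space_iff)

lemma emeasure_mu_ab_singleton: "emeasure (mu_ab \<alpha> \<beta>) {x} = 0"
proof (cases "{x} \<in> sets (restrict_space lborel Xsp)")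
  case True
  have "(\<lambda>\<theta>. ennreal (sin (\<theta> / 2) powr (2 * \<alpha> + 1) * cos (\<theta> / 2) powr (2 * \<beta> + 1)))
      \<in> borel_measurable (restrict_space lborel Xsp)"
    by (rule measurable_restrict_space1, simp only: measurable_lborel2) measurable
  then show ?thesis
    unfolding mu_ab_def using True emeasure_leb_X_singleton[of x] by (simp add: leb_X_def emeasure_density)
qed (simp add: mu_ab_def emeasure_notin_sets)

theorem lemma4p1:
  fixes M :: "real measure" and \<xi> s c :: real
  assumes M_choice: "M = leb_X \<or> (\<exists>\<alpha> \<beta>. \<alpha> > -1 \<and> \<beta> > -1 \<and> M = mu_ab \<alpha> \<beta>)"
    and xi: "0 < \<xi>" "\<xi> \<le> 1"
    and s: "s > \<xi>" and c: "c > 0"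
    and ball_lower: "\<And>\<theta> r. \<theta> \<in> Xsp \<Longrightarrow> 0 < r \<Longrightarrow> r < pi \<Longrightarrow> measure M (ballX \<theta> r) \<ge> c * r powr s"
  shows "\<exists>C. \<forall>f t. integrable M f \<longrightarrow> t > 0 \<longrightarrow>
           emeasure M {\<theta> \<in> space M. U_op M \<xi> (\<lambda>x. \<bar>f x\<bar>) \<theta> > ennreal t}
             \<le> ennreal ((C * (\<integral>x. \<bar>f x\<bar> \<partial>M) / t) powr (s / (s - \<xi>)))"
proof -
  have "sets M = sets (restrict_space lborel Xsp)"
    using M_choice by (auto simp: leb_X_def mu_ab_def)
  moreover have "emeasure M Xsp < \<infinity>"
    by (rule emeasure_Xsp_finite_if_ball_lower[OF c ball_lower])
  moreover have "\<And>x. emeasure M {x} = 0"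
    using M_choice emeasure_leb_X_singleton emeasure_mu_ab_singleton by auto
  ultimately interpret diffuse_finite_measure_on_X M
    by unfold_locales
  show ?thesis
    using weak_type_U_op[OF c xi(1) s ball_lower] by blast
qed

end
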